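(* Let $\mathcal{M}$, $(E_d)$ be as in the context and let $F=f^iE_i$ satisfy $\mathrm{Div}(F)=E_i[f^i]=0$. For any planar trees $t_1,\dots,t_p$ ($p\ge0$), the elementary differential of the aroma consisting of the single tree with a free edge $(t_1\cdots t_p\,\times)\curvearrowright\bullet$ vanishes: $$\mathcal{F}^F\big(((t_1\cdots t_p\,\times)\curvearrowright\bullet)_\circlearrowleft\big)=\sum_{i}\Big(\big(\mathcal{F}^F(t_1)\cdots\mathcal{F}^F(t_p)\,E_i\big)\rhd F\Big)^i=0.$$
   Context: Einstein summation is used. $\mathcal{M}$ is a smooth manifold with a global frame $E_1,\dots,E_n$ whose Jacobi brackets have constant structure constants. For vector fields $X_k=x_k^iE_i$, a function $\phi$ and $Y=y^jE_j$, the frozen product acts by $(X_1\cdots X_p)\rhd\phi=x_1^{i_1}\cdots x_p^{i_p}E_{i_1}[\cdots E_{i_p}[\phi]\cdots]$ and $(X_1\cdots X_p)\rhd Y=((X_1\cdots X_p)\rhd y^j)E_j$; $Z^i$ denotes the $i$-th frame component of a vector field $Z$. Planar rooted trees (one decoration $\bullet$): $(t_1\cdots t_p)\curvearrowright\bullet$ is the tree whose root has ordered children subtrees $t_1,\dots,t_p$. Elementary differentials: $\mathcal{F}^F(\bullet)=F$, $\mathcal{F}^F((t_1\cdots t_p)\curvearrowright\bullet)=(\mathcal{F}^F(t_1)\cdots\mathcal{F}^F(t_p))\rhd F$. For the tree with a free edge $u=(t_1\cdots t_p\,\times)\curvearrowright\bullet$ (root with children $t_1,\dots,t_p$ followed by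 an empty input $\times$), $\mathcal{F}^F(u)(X)=(\mathcal{F}^F(t_1)\cdots\mathcal{F}^F(t_p)X)\rhd F$, and the aroma $(u)_\circlearrowleft$ is mapped to the function $\mathcal{F}^F(u)^{i}(E_{i})$ (summed over $i$). *)

theory Defs
  imports Complex_Main
begin

text \<open>Smooth functions on the manifold are modelled by a set
  S of real functions on a point type 'm; the global frame is a finite family of operators
  E :: 'i \<Rightarrow> ('m \<Rightarrow> real) \<Rightarrow> ('m \<Rightarrow> real) which are derivations of S with constant
  structure constants c. Vector fields are represented by their frame components
  'i \<Rightarrow> ('m \<Rightarrow> real).\<close>

definition frame_setting ::
  "('m \<Rightarrow> real) set \<Rightarrow> ('i::finite \<Rightarrow> ('m \<Rightarrow> real) \<Rightarrow> ('m \<Rightarrow> real)) \<Rightarrow> ('i \<Rightarrow> 'i \<Rightarrow> 'i \<Rightarrow> real) \<Rightarrow> bool"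
where
  "frame_setting S E c \<longleftrightarrow>
     (\<forall>a::real. (\<lambda>_. a) \<in> S) \<and>
     (\<forall>f\<in>S. \<forall>g\<in>S. (\<lambda>m. f m + g m) \<in> S \<and> (\<lambda>m. f m * g m) \<in> S) \<and>
     (\<forall>a::real. \<forall>f\<in>S. (\<lambda>m. a * f m) \<in> S) \<and>
     (\<forall>i. \<forall>f\<in>S. E i f \<in> S) \<and>
     (\<forall>i. \<forall>f\<in>S. \<forall>g\<in>S. E i (\<lambda>m. f m + g m) = (\<lambda>m. E i f m + E i g m)) \<and>
     (\<forall>i. \<forall>a::real. \<forall>f\<in>S. E i (\<lambda>m. a * f m) = (\<lambda>m. a * E i f m)) \<and>
     (\<forall>i. \<forall>f\<in>S. \<forall>g\<in>S. E i (\<lambda>m. f m * g m) = (\<lambda>m. E i f m * g m + f m * E i g m)) \<and>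
     (\<forall>i j. \<forall>f\<in>S. (\<lambda>m. E i (E j f) m - E j (E i f) m) = (\<lambda>m. \<Sum>k\<in>UNIV. c i j k * E k f m))"

type_synonym ('i, 'm) vfield = "'i \<Rightarrow> 'm \<Rightarrow> real"

definition smooth_vf :: "('m \<Rightarrow> real) set \<Rightarrow> ('i, 'm) vfield \<Rightarrow> bool" where
  "smooth_vf S X \<longleftrightarrow> (\<forall>i. X i \<in> S)"

text \<open>Frozen product: frozen_aux Xs Op phi = x_1^{i_1}...x_p^{i_p} (O o E_{i_1} o ... o E_{i_p}) phi.\<close>
fun frozen_aux :: "('i::finite \<Rightarrow> ('m \<Rightarrow> real) \<Rightarrow> ('m \<Rightarrow> real)) \<Rightarrow> ('i, 'm) vfield list
                    \<Rightarrow> (('m \<Rightarrow> real) \<Rightarrow> ('m \<Rightarrow> real)) \<Rightarrow> ('m \<Rightarrow> real) \<Rightarrow> ('m \<Rightarrow> real)" where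
  "frozen_aux E [] Op phi = Op phi"
| "frozen_aux E (X # Xs) Op phi = (\<lambda>m. \<Sum>i\<in>UNIV. X i m * frozen_aux E Xs (Op \<circ> E i) phi m)"

definition frozen :: "('i::finite \<Rightarrow> ('m \<Rightarrow> real) \<Rightarrow> ('m \<Rightarrow> real)) \<Rightarrow> ('i, 'm) vfield list
                    \<Rightarrow> ('m \<Rightarrow> real) \<Rightarrow> ('m \<Rightarrow> real)" where
  "frozen E Xs phi = frozen_aux E Xs id phi"

definition frozen_vf :: "('i::finite \<Rightarrow> ('m \<Rightarrow> real) \<Rightarrow> ('m \<Rightarrow> real)) \<Rightarrow> ('i, 'm) vfield list
                    \<Rightarrow> ('i, 'm) vfield \<Rightarrow> ('i, 'm) vfield" where
  "frozen_vf E Xs Y = (\<lambda>j. frozen E Xs (Y j))"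

definition frame_vf :: "'i \<Rightarrow> ('i, 'm) vfield" where
  "frame_vf i = (\<lambda>k _. if k = i then 1 else 0)"

text \<open>Planar rooted trees with one decoration: Node ts is (t_1 ... t_p) \<curvearrowright> \<bullet>.\<close>
datatype ptree = Node "ptree list"

fun elem_diff :: "('i::finite \<Rightarrow> ('m \<Rightarrow> real) \<Rightarrow> ('m \<Rightarrow> real)) \<Rightarrow> ('i, 'm) vfield \<Rightarrow> ptree \<Rightarrow> ('i, 'm) vfield" where
  "elem_diff E F (Node ts) = frozen_vf E (map (elem_diff E F) ts) F"

text \<open>Elementary differential of u = (t_1 ... t_p x) \<curvearrowright> \<bullet> applied to X.\<close>
definition elem_diff_free :: "('i::finite \<Rightarrow> ('m \<Rightarrow> real) \<Rightarrow> ('m \<Rightarrow> real)) \<Rightarrow> ('i, 'm) vfield \<Rightarrow> ptree list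
                              \<Rightarrow> ('i, 'm) vfield \<Rightarrow> ('i, 'm) vfield" where
  "elem_diff_free E F ts X = frozen_vf E (map (elem_diff E F) ts @ [X]) F"

text \<open>Aroma (u)_\<circlearrowleft> mapped to the function sum_i F(u)^i(E_i).\<close>
definition aroma_free :: "('i::finite \<Rightarrow> ('m \<Rightarrow> real) \<Rightarrow> ('m \<Rightarrow> real)) \<Rightarrow> ('i, 'm) vfield \<Rightarrow> ptree list
                          \<Rightarrow> 'm \<Rightarrow> real" where
  "aroma_free E F ts = (\<lambda>m. \<Sum>i\<in>UNIV. elem_diff_free E F ts (frame_vf i) i m)"

definition Div :: "('i::finite \<Rightarrow> ('m \<Rightarrow> real) \<Rightarrow> ('m \<Rightarrow> real)) \<Rightarrow> ('i, 'm) vfield \<Rightarrow> 'm \<Rightarrow> real" where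
  "Div E F = (\<lambda>m. \<Sum>i\<in>UNIV. E i (F i) m)"

end

theory Submission
  imports Defs
begin

text \<open>Fed with E_i, the free edge makes E_i act directly on f^i, beneath all the other frame
  derivatives of the frozen product. Summing over i therefore gives the frozen product of
  t_1 ... t_p applied to Div F = 0, and the frozen product is additive in that argument because
  every E_i is.\<close>

definition additive_on :: "('m \<Rightarrow> real) set \<Rightarrow> (('m \<Rightarrow> real) \<Rightarrow> ('m \<Rightarrow> real)) \<Rightarrow> bool" where
  "additive_on S Op \<longleftrightarrow> (\<forall>f\<in>S. \<forall>g\<in>S. Op (\<lambda>m. f m + g m) = (\<lambda>m. Op f m + Op g m))"

lemma additive_onD:
  "additive_on S Op \<Longrightarrow> f \<in> S \<Longrightarrow> g \<in> S \<Longrightarrow> Op (\<lambda>m. f m + g m) = (\<lambda>m. Op f m + Op g m)"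
  unfolding additive_on_def by blast

lemma additive_on_zero:
  assumes "additive_on S Op" and "(\<lambda>_. 0) \<in> S"
  shows "Op (\<lambda>_. 0) = (\<lambda>_. 0)"
  using additive_onD[OF assms(1) assms(2) assms(2)] by (simp add: fun_eq_iff)

lemma sum_fun_closed:
  assumes zero: "(\<lambda>_. 0) \<in> S"
    and add: "\<And>f g. f \<in> S \<Longrightarrow> g \<in> S \<Longrightarrow> (\<lambda>m. f m + g m) \<in> S"
    and "finite A" and "\<And>i. i \<in> A \<Longrightarrow> g i \<in> S"
  shows "(\<lambda>m. \<Sum>i\<in>A. g i m) \<in> S"
  using assms(3,4) by (induction A rule: finite_induct) (simp_all add: zero add)

lemma additive_on_sum:
  assumes Op: "additive_on S Op"
    and zero: "(\<lambda>_. 0) \<in> S"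
    and add: "\<And>f g. f \<in> S \<Longrightarrow> g \<in> S \<Longrightarrow> (\<lambda>m. f m + g m) \<in> S"
    and "finite A" and "\<And>i. i \<in> A \<Longrightarrow> g i \<in> S"
  shows "Op (\<lambda>m. \<Sum>i\<in>A. g i m) = (\<lambda>m. \<Sum>i\<in>A. Op (g i) m)"
  using assms(4,5)
proof (induction A rule: finite_induct)
  case empty
  show ?case using additive_on_zero[OF Op zero] by simp
next
  case (insert x A)
  have "(\<lambda>m. \<Sum>i\<in>A. g i m) \<in> S"
    using insert.prems by (intro sum_fun_closed[OF zero add insert.hyps(1)]) auto
  with insert show ?case
    by (simp add: additive_onD[OF Op])
qed

lemma additive_on_comp:
  assumes "additive_on S Op" and "additive_on S D" and "\<And>f. f \<in> S \<Longrightarrow> D f \<in> S"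
  shows "additive_on S (Op \<circ> D)"
  unfolding additive_on_def
  by (simp add: additive_onD[OF assms(2)] additive_onD[OF assms(1)] assms(3))

lemma frame_setting_const_closed: "frame_setting S E c \<Longrightarrow> (\<lambda>_. a) \<in> S"
  by (simp add: frame_setting_def)

lemma frame_setting_add_closed:
  "frame_setting S E c \<Longrightarrow> f \<in> S \<Longrightarrow> g \<in> S \<Longrightarrow> (\<lambda>m. f m + g m) \<in> S"
  by (simp add: frame_setting_def)

lemma frame_setting_frame_closed: "frame_setting S E c \<Longrightarrow> f \<in> S \<Longrightarrow> E i f \<in> S"
  by (simp add: frame_setting_def)

lemma frame_setting_additive_on: "frame_setting S E c \<Longrightarrow> additive_on S (E i)"
  by (simp add: frame_setting_def additive_on_def)

lemma frozen_aux_additive_on: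
  assumes fs: "frame_setting S E c" and "additive_on S Op"
  shows "additive_on S (frozen_aux E Xs Op)"
  using assms(2)
proof (induction Xs arbitrary: Op)
  case Nil
  have "frozen_aux E [] Op = Op" by (simp add: fun_eq_iff)
  with Nil show ?case by simp
next
  case (Cons X Xs)
  have IH: "additive_on S (frozen_aux E Xs (Op \<circ> E i))" for i
    using additive_on_comp[OF Cons.prems frame_setting_additive_on[OF fs]
        frame_setting_frame_closed[OF fs]]
    by (rule Cons.IH)
  show ?case
    unfolding additive_on_def
  proof (intro ballI)
    fix f g assume fg: "f \<in> S" "g \<in> S"
    have "frozen_aux E Xs (Op \<circ> E i) (\<lambda>m. f m + g m)
        = (\<lambda>m. frozen_aux E Xs (Op \<circ> E i) f m + frozen_aux E Xs (Op \<circ> E i) g m)" for i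
      using additive_onD[OF IH fg] .
    then show "frozen_aux E (X # Xs) Op (\<lambda>m. f m + g m)
        = (\<lambda>m. frozen_aux E (X # Xs) Op f m + frozen_aux E (X # Xs) Op g m)"
      by (simp only: frozen_aux.simps distrib_left sum.distrib)
  qed
qed

lemma frozen_additive_on:
  assumes "frame_setting S E c"
  shows "additive_on S (frozen E Xs)"
  using frozen_aux_additive_on[OF assms, of id] unfolding frozen_def additive_on_def by simp

lemma frozen_aux_snoc_frame_vf:
  "frozen_aux E (Xs @ [frame_vf i]) Op phi = frozen_aux E Xs Op (E i phi)"
proof (induction Xs arbitrary: Op)
  case Nil
  show ?case by (simp add: fun_eq_iff frame_vf_def of_bool_def[symmetric])
next
  case (Cons X Xs)
  show ?case by (simp only: append_Cons frozen_aux.simps Cons.IH)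
qed

lemma aroma_free_eq_frozen_sum:
  "aroma_free E F ts = (\<lambda>m. \<Sum>i\<in>UNIV. frozen E (map (elem_diff E F) ts) (E i (F i)) m)"
  unfolding aroma_free_def elem_diff_free_def frozen_vf_def frozen_def frozen_aux_snoc_frame_vf
  by simp

theorem lemma6p8:
  fixes S :: "('m \<Rightarrow> real) set"
    and E :: "'i::finite \<Rightarrow> ('m \<Rightarrow> real) \<Rightarrow> ('m \<Rightarrow> real)"
    and c :: "'i \<Rightarrow> 'i \<Rightarrow> 'i \<Rightarrow> real"
    and F :: "('i, 'm) vfield"
    and ts :: "ptree list"
  assumes "frame_setting S E c"
    and "smooth_vf S F"
    and "Div E F = (\<lambda>_. 0)"
  shows "aroma_free E F ts = (\<lambda>_. 0)"
proof -
  let ?Op = "frozen E (map (elem_diff E F) ts)"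
  have zero: "(\<lambda>_. 0) \<in> S"
    using frame_setting_const_closed[OF assms(1)] .
  have div_terms: "E i (F i) \<in> S" for i
    using assms(2) frame_setting_frame_closed[OF assms(1)] unfolding smooth_vf_def by blast
  have "aroma_free E F ts = (\<lambda>m. \<Sum>i\<in>UNIV. ?Op (E i (F i)) m)"
    by (rule aroma_free_eq_frozen_sum)
  also have "\<dots> = ?Op (\<lambda>m. \<Sum>i\<in>UNIV. E i (F i) m)"
    by (rule additive_on_sum[OF frozen_additive_on[OF assms(1)] zero
          frame_setting_add_closed[OF assms(1)] finite_UNIV div_terms, symmetric])
  also have "(\<lambda>m. \<Sum>i\<in>UNIV. E i (F i) m) = (\<lambda>_. 0)"
    using assms(3) unfolding Div_def .
  also have "?Op (\<lambda>_. 0) = (\<lambda>_. 0)"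
    by (rule additive_on_zero[OF frozen_additive_on[OF assms(1)] zero])
  finally show ?thesis .
qed

end
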